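(* Let $R$ be a ring and $G$ a group. If the group ring $RG$ is a DT ring, then $R$ is a DT ring.
   Context: All rings are associative with identity; $U(R)$ is the group of units. $\Delta(R)=\{x\in R: x+u\in U(R)\text{ for all }u\in U(R)\}$. $\mathrm{Tr}(R)=\{x\in R: x^3=x\}$. A ring $R$ is a DT ring if every $r\in R$ can be written $r=e+d$ with $e\in\mathrm{Tr}(R)$ and $d\in\Delta(R)$. $RG$ denotes the group ring. *)

theory Defs
  imports "HOL-Library.Poly_Mapping"
begin

definition unit_elem :: "'a::ring_1 \<Rightarrow> bool" where
  "unit_elem x \<longleftrightarrow> (\<exists>y. x * y = 1 \<and> y * x = 1)"

definition Units_set :: "'a::ring_1 set" where
  "Units_set = {x. unit_elem x}"

definition Delta :: "'a::ring_1 set" where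
  "Delta = {x. \<forall>u \<in> Units_set. x + u \<in> Units_set}"

definition Tr :: "'a::ring_1 set" where
  "Tr = {x. x ^ 3 = x}"

definition DT_ring :: "'a::ring_1 itself \<Rightarrow> bool" where
  "DT_ring _ \<longleftrightarrow> (\<forall>r::'a. \<exists>e d. r = e + d \<and> e \<in> Tr \<and> d \<in> Delta)"

text \<open>The group ring RG: finitely supported functions G \<Rightarrow> R with convolution product
  (Poly_Mapping), the group G being written additively (class group_add, not necessarily abelian).\<close>
type_synonym ('g, 'r) group_ring = "'g \<Rightarrow>\<^sub>0 'r"

end

theory Submission
  imports Defs
begin

text \<open>The augmentation map \<open>RG \<rightarrow> R\<close>, summing the coefficients, is a unital ring homomorphism
  with the embedding of \<open>R\<close> as constants as a ring homomorphism section. Homomorphisms map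
  tripotents to tripotents; and since every unit of \<open>R\<close> lifts along the section to a unit of
  \<open>RG\<close>, a retraction maps \<open>\<Delta>(RG)\<close> into \<open>\<Delta>(R)\<close>. Applying the augmentation to a DT decomposition
  of the constant \<open>r\<close> therefore gives a DT decomposition of \<open>r\<close>.\<close>

locale ring_1_hom =
  fixes f :: "'a::ring_1 \<Rightarrow> 'b::ring_1"
  assumes hom_add: "f (x + y) = f x + f y"
    and hom_mult: "f (x * y) = f x * f y"
    and hom_one: "f 1 = 1"
begin

lemma hom_power: "f (x ^ n) = f x ^ n"
  by (induction n) (simp_all add: hom_mult hom_one)

lemma hom_Tr: "x \<in> Tr \<Longrightarrow> f x \<in> Tr"
  unfolding Tr_def by (simp flip: hom_power)

lemma hom_Units_set:
  assumes "x \<in> Units_set"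
  shows "f x \<in> Units_set"
proof -
  obtain y where "x * y = 1" "y * x = 1"
    using assms by (auto simp: Units_set_def unit_elem_def)
  then have "f x * f y = 1" "f y * f x = 1"
    by (simp_all add: hom_one flip: hom_mult)
  then show ?thesis
    by (auto simp: Units_set_def unit_elem_def)
qed

end

locale ring_1_retraction = ring_1_hom f + sec: ring_1_hom s
  for f :: "'a::ring_1 \<Rightarrow> 'b::ring_1" and s :: "'b \<Rightarrow> 'a" +
  assumes retraction: "f (s y) = y"
begin

lemma hom_Delta:
  assumes "d \<in> Delta"
  shows "f d \<in> Delta"
  unfolding Delta_def
proof (intro CollectI ballI)
  fix u :: 'b
  assume "u \<in> Units_set"
  then have "d + s u \<in> Units_set"
    using assms sec.hom_Units_set by (simp add: Delta_def)
  then have "f (d + s u) \<in> Units_set"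
    by (rule hom_Units_set)
  then show "f d + u \<in> Units_set"
    by (simp add: hom_add retraction)
qed

lemma DT_ring_retraction:
  assumes "DT_ring TYPE('a)"
  shows "DT_ring TYPE('b)"
  unfolding DT_ring_def
proof
  fix r :: 'b
  obtain e d where decomp: "s r = e + d" and "e \<in> Tr" "d \<in> Delta"
    using assms unfolding DT_ring_def by blast
  have "r = f (s r)"
    by (simp add: retraction)
  also have "\<dots> = f e + f d"
    by (simp add: decomp hom_add)
  finally have "r = f e + f d" .
  moreover have "f e \<in> Tr" "f d \<in> Delta"
    using \<open>e \<in> Tr\<close> \<open>d \<in> Delta\<close> by (simp_all add: hom_Tr hom_Delta)
  ultimately show "\<exists>e d. r = e + d \<and> e \<in> Tr \<and> d \<in> Delta"
    by blast
qed

end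

definition augmentation :: "('g::monoid_add \<Rightarrow>\<^sub>0 'r::ring_1) \<Rightarrow> 'r" where
  "augmentation p = (\<Sum>k\<in>Poly_Mapping.keys p. Poly_Mapping.lookup p k)"

lemma augmentation_add: "augmentation (p + q) = augmentation p + augmentation q"
  unfolding augmentation_def by (rule setsum_keys_plus_distrib) auto

lemma augmentation_sum:
  "finite A \<Longrightarrow> augmentation (sum f A) = (\<Sum>x\<in>A. augmentation (f x))"
  by (induction A rule: finite_induct) (simp_all add: augmentation_add, simp add: augmentation_def)

lemma augmentation_single: "augmentation (Poly_Mapping.single k a) = a"
  unfolding augmentation_def by (cases "a = 0") auto

lemma sum_single_lookup:
  "(\<Sum>k\<in>Poly_Mapping.keys p. Poly_Mapping.single k (Poly_Mapping.lookup p k)) = p"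
  by (rule poly_mapping_eqI) (simp add: lookup_sum lookup_single when_def in_keys_iff)

lemma augmentation_mult:
  fixes p q :: "'g::monoid_add \<Rightarrow>\<^sub>0 'r::ring_1"
  shows "augmentation (p * q) = augmentation p * augmentation q"
proof -
  let ?K = "Poly_Mapping.keys p" and ?L = "Poly_Mapping.keys q"
  let ?P = "\<lambda>k. Poly_Mapping.single k (Poly_Mapping.lookup p k)"
  let ?Q = "\<lambda>l. Poly_Mapping.single l (Poly_Mapping.lookup q l)"
  have "p * q = (\<Sum>k\<in>?K. ?P k) * (\<Sum>l\<in>?L. ?Q l)"
    by (simp only: sum_single_lookup)
  also have "\<dots> = (\<Sum>k\<in>?K. \<Sum>l\<in>?L. ?P k * ?Q l)"
    by (simp add: sum_distrib_left sum_distrib_right sum.swap[of _ ?L])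
  finally have "augmentation (p * q) = (\<Sum>k\<in>?K. \<Sum>l\<in>?L. augmentation (?P k * ?Q l))"
    by (simp add: augmentation_sum)
  also have "\<dots> = (\<Sum>k\<in>?K. \<Sum>l\<in>?L. Poly_Mapping.lookup p k * Poly_Mapping.lookup q l)"
    by (simp add: mult_single augmentation_single)
  also have "\<dots> = augmentation p * augmentation q"
    by (simp add: augmentation_def sum_distrib_left sum_distrib_right sum.swap[of _ ?L])
  finally show ?thesis .
qed

lemma ring_1_retraction_augmentation:
  "ring_1_retraction (augmentation :: ('g::monoid_add \<Rightarrow>\<^sub>0 'r::ring_1) \<Rightarrow> 'r) (Poly_Mapping.single 0)"
proof unfold_locales
  show "augmentation (1 :: 'g \<Rightarrow>\<^sub>0 'r) = 1"
    using augmentation_single[of 0 "1::'r"] by simp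
qed (simp_all add: augmentation_add augmentation_mult augmentation_single single_add mult_single)

theorem lemma3p6:
  assumes "DT_ring TYPE(('g::group_add, 'r::ring_1) group_ring)"
  shows "DT_ring TYPE('r)"
  using ring_1_retraction.DT_ring_retraction[OF ring_1_retraction_augmentation assms] .

end
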